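(* Let $f,g_1,\dots,g_m\in\mathrm{CN}^n$ have a common convex domain $M\subseteq\mathbb{R}^n$, let $D\subseteq M$, let $t(x)=\max_{1\le i\le m} g_i(x)$, $(s)_+=\max\{s,0\}$, and $h(x)=((t(x))_+,f(x))\in\mathbb{R}^2$. Then $h$ is conic with respect to the lexicographic order on $\mathbb{R}^2$, and if the feasible set $S=\{x\in D: g_i(x)\le 0 \text{ for all } i\}$ is nonempty, then the set of minimizers of $f$ over $S$ coincides with the set of lexicographic minimizers of $h$ over $D$.
   Context: A function $f:\mathrm{dom}(f)\to \Omega$, with $\mathrm{dom}(f)\subseteq\mathbb{R}^n$ convex and $\Omega$ totally ordered ($\mathbb{R}$, or $\mathbb{R}^2$ with lexicographic order), is conic if for all $y,z\in\mathrm{dom}(f)$ and $t\ge 0$ with $f(y)\le f(z)$ and $z+t(z-y)\in\mathrm{dom}(f)$, one has $f(z+t(z-y))\ge f(z)$. $\mathrm{CN}^n$ is the class of real-valued conic functions on convex subsets of $\mathbb{R}^n$. *)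

theory Defs
  imports "HOL-Analysis.Analysis"
begin

definition conic_wrt :: "('b \<Rightarrow> 'b \<Rightarrow> bool) \<Rightarrow> ('a::real_vector) set \<Rightarrow> ('a \<Rightarrow> 'b) \<Rightarrow> bool" where
  "conic_wrt le M f \<longleftrightarrow> convex M \<and>
     (\<forall>y\<in>M. \<forall>z\<in>M. \<forall>t::real. t \<ge> 0 \<and> le (f y) (f z) \<and> z + t *\<^sub>R (z - y) \<in> M
        \<longrightarrow> le (f z) (f (z + t *\<^sub>R (z - y))))"

definition CN :: "('a::real_vector) set \<Rightarrow> ('a \<Rightarrow> real) \<Rightarrow> bool" where
  "CN M f \<longleftrightarrow> conic_wrt (\<le>) M f"

definition lex_le :: "real \<times> real \<Rightarrow> real \<times> real \<Rightarrow> bool" where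
  "lex_le p q \<longleftrightarrow> fst p < fst q \<or> (fst p = fst q \<and> snd p \<le> snd q)"

end

theory Submission
  imports Defs
begin

text \<open>The positive part of the largest constraint is again a real conic function, and a pair of
real conic functions is conic for the lexicographic order: a strict increase of the first
component along a ray persists because a conic function cannot decrease after it has strictly
increased. Minimising the resulting penalty pair lexicographically first forces the penalty to
vanish (possible since the feasible set is nonempty) and then minimises \<open>f\<close> among feasible
points.\<close>

lemma CN_convex: "CN M f \<Longrightarrow> convex M"
  unfolding CN_def conic_wrt_def by blast

lemma CN_mono_ray:
  assumes "CN M f" "y \<in> M" "z \<in> M" "t \<ge> 0" "f y \<le> f z" "z + t *\<^sub>R (z - y) \<in> M"
  shows "f z \<le> f (z + t *\<^sub>R (z - y))"
  using assms unfolding CN_def conic_wrt_def by blast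

lemma CN_strict_mono_ray:
  fixes f :: "'a::real_vector \<Rightarrow> real"
  assumes "CN M f" "y \<in> M" "z \<in> M" "t > 0" "f y < f z" "z + t *\<^sub>R (z - y) \<in> M"
  shows "f z < f (z + t *\<^sub>R (z - y))"
proof (rule ccontr)
  define w where "w = z + t *\<^sub>R (z - y)"
  assume "\<not> ?thesis"
  then have "f w \<le> f z" unfolding w_def by simp
  \<comment> \<open>The ray from \<open>w\<close> through \<open>z\<close> comes back to \<open>y\<close>.\<close>
  moreover have "z + (1/t) *\<^sub>R (z - w) = y"
    using \<open>t > 0\<close> unfolding w_def by (simp add: algebra_simps)
  ultimately have "f z \<le> f y"
    using CN_mono_ray[OF assms(1) _ \<open>z \<in> M\<close>, of w "1/t"] assms by (simp add: w_def)
  with \<open>f y < f z\<close> show False by simp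
qed

lemma CN_const: "convex M \<Longrightarrow> CN M (\<lambda>_. c)"
  unfolding CN_def conic_wrt_def by simp

lemma CN_max:
  fixes f g :: "'a::real_vector \<Rightarrow> real"
  assumes f: "CN M f" and g: "CN M g"
  shows "CN M (\<lambda>x. max (f x) (g x))"
  unfolding CN_def conic_wrt_def
proof (intro conjI ballI allI impI)
  show "convex M" using CN_convex[OF f] .
  fix y z and t :: real
  assume y: "y \<in> M" and z: "z \<in> M"
    and H: "0 \<le> t \<and> max (f y) (g y) \<le> max (f z) (g z) \<and> z + t *\<^sub>R (z - y) \<in> M"
  show "max (f z) (g z) \<le> max (f (z + t *\<^sub>R (z - y))) (g (z + t *\<^sub>R (z - y)))"
  proof (cases "g z \<le> f z")
    case True
    then show ?thesis using CN_mono_ray[OF f y z] H by fastforce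
  next
    case False
    then show ?thesis using CN_mono_ray[OF g y z] H by fastforce
  qed
qed

lemma CN_Max:
  fixes g :: "'i \<Rightarrow> 'a::real_vector \<Rightarrow> real"
  assumes "finite I" "I \<noteq> {}" "\<forall>i\<in>I. CN M (g i)"
  shows "CN M (\<lambda>x. Max ((\<lambda>i. g i x) ` I))"
  using assms
proof (induction I rule: finite_ne_induct)
  case (singleton i)
  then show ?case by simp
next
  case (insert i I)
  then have "CN M (\<lambda>x. max (g i x) (Max ((\<lambda>i. g i x) ` I)))"
    by (intro CN_max) auto
  with insert.hyps show ?case by simp
qed

lemma conic_lex_pair:
  fixes p q :: "'a::real_vector \<Rightarrow> real"
  assumes p: "CN M p" and q: "CN M q"
  shows "conic_wrt lex_le M (\<lambda>x. (p x, q x))"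
  unfolding conic_wrt_def
proof (intro conjI ballI allI impI)
  show "convex M" using CN_convex[OF p] .
  fix y z and t :: real
  assume y: "y \<in> M" and z: "z \<in> M"
    and H: "0 \<le> t \<and> lex_le (p y, q y) (p z, q z) \<and> z + t *\<^sub>R (z - y) \<in> M"
  define w where "w = z + t *\<^sub>R (z - y)"
  then have t: "t \<ge> 0" and w: "w \<in> M" and yz: "lex_le (p y, q y) (p z, q z)"
    using H by (auto simp: w_def)
  have "lex_le (p z, q z) (p w, q w)"
  proof (cases "t = 0")
    case True
    then show ?thesis by (simp add: w_def lex_le_def)
  next
    case False
    from yz consider (less) "p y < p z" | (equal) "p y = p z" "q y \<le> q z"
      unfolding lex_le_def by auto
    then show ?thesis
    proof cases
      case less
      then have "p z < p w"
        using CN_strict_mono_ray[OF p y z] False t w by (simp add: w_def)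
      then show ?thesis unfolding lex_le_def by simp
    next
      case equal
      then have "p z \<le> p w" "q z \<le> q w"
        using CN_mono_ray[OF p y z t] CN_mono_ray[OF q y z t] w by (simp_all add: w_def)
      then show ?thesis unfolding lex_le_def by auto
    qed
  qed
  then show "lex_le (p z, q z) (p (z + t *\<^sub>R (z - y)), q (z + t *\<^sub>R (z - y)))"
    by (simp add: w_def)
qed

lemma lex_argmin_exact_penalty:
  fixes p f :: "'a \<Rightarrow> real"
  assumes feasible: "\<exists>s\<in>D. p s \<le> 0"
  defines "S \<equiv> {x\<in>D. p x \<le> 0}"
  shows "{x\<in>S. \<forall>y\<in>S. f x \<le> f y}
       = {x\<in>D. \<forall>y\<in>D. lex_le (max (p x) 0, f x) (max (p y) 0, f y)}"
proof (intro equalityI subsetI)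
  fix x assume "x \<in> {x\<in>S. \<forall>y\<in>S. f x \<le> f y}"
  then show "x \<in> {x\<in>D. \<forall>y\<in>D. lex_le (max (p x) 0, f x) (max (p y) 0, f y)}"
    unfolding S_def lex_le_def by force
next
  fix x assume x: "x \<in> {x\<in>D. \<forall>y\<in>D. lex_le (max (p x) 0, f x) (max (p y) 0, f y)}"
  from feasible obtain s where "s \<in> D" "p s \<le> 0" by blast
  with x have "p x \<le> 0" unfolding lex_le_def by fastforce
  with x show "x \<in> {x\<in>S. \<forall>y\<in>S. f x \<le> f y}"
    unfolding S_def lex_le_def by auto
qed

theorem mainTheorem4:
  fixes M D :: "(real ^ 'n) set" and f :: "real ^ 'n \<Rightarrow> real"
    and g :: "nat \<Rightarrow> real ^ 'n \<Rightarrow> real" and m :: nat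
  assumes "m \<ge> 1"
    and "CN M f"
    and "\<forall>i\<in>{1..m}. CN M (g i)"
    and "D \<subseteq> M"
  defines "h \<equiv> (\<lambda>x. (max (Max ((\<lambda>i. g i x) ` {1..m})) 0, f x))"
    and "S \<equiv> {x\<in>D. \<forall>i\<in>{1..m}. g i x \<le> 0}"
  shows "conic_wrt lex_le M h \<and>
    (S \<noteq> {} \<longrightarrow>
      {x\<in>S. \<forall>y\<in>S. f x \<le> f y} = {x\<in>D. \<forall>y\<in>D. lex_le (h x) (h y)})"
proof -
  define T where "T x = Max ((\<lambda>i. g i x) ` {1..m})" for x
  have nonempty: "{1..m} \<noteq> {}" using \<open>m \<ge> 1\<close> by simp
  have "CN M (\<lambda>x. max (T x) 0)"
    unfolding T_def using assms(3) nonempty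
    by (intro CN_max CN_Max CN_const CN_convex[OF \<open>CN M f\<close>]) auto
  then have "conic_wrt lex_le M h"
    using conic_lex_pair[OF _ \<open>CN M f\<close>] unfolding h_def T_def by blast
  moreover have "S = {x\<in>D. T x \<le> 0}"
    unfolding S_def T_def using nonempty by auto
  ultimately show ?thesis
    using lex_argmin_exact_penalty[of D T f] unfolding h_def T_def by auto
qed

end
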